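(* Let $X$, $Y$, $Z$ be positive, absolutely continuous random variables with densities $f_X$, $f_Y$, $f_Z$, such that $X$ and $Y$ are independent and $Z \stackrel{d}{=} X/(X+Y)$ (so $Z$ takes values in $(0,1)$). Suppose that the density of $Y$ admits the decomposition $$f_Y(sx)=\mathbb{A}(s)\,\mathbb{B}(x)\,\mathbb{C}(sx),\qquad x,s>0,$$ for some positive real-valued functions $\mathbb{A},\mathbb{B},\mathbb{C}$ on $(0,\infty)$, where $$\mathbb{C}(x)=(1+\theta x)^{-p},\qquad x>0,$$ for some constants $\theta,p>0$. Then the density of $X$ is given, for $x>0$, by $$f_X(x)=\frac{1}{x\,\mathbb{B}(x)}\;\mathcal{G}_p^{-1}\left\{\frac{1}{s^{p}\,\mathbb{A}\!\left(\frac{1}{\theta s}\right)}\left(\frac{\theta s}{1+\theta s}\right)^2 f_Z\!\left(\frac{\theta s}{1+\theta s}\right)\right\}(x).$$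
   Context: For $p>0$, the generalized Stieltjes transform of a function $g$ on $(0,\infty)$ is $\mathcal{G}_p\{g\}(y)=\int_0^\infty g(x)\,(y+x)^{-p}\,\mathrm{d}x$, $y>0$; $\mathcal{G}_p^{-1}$ denotes its inverse, i.e. $\mathcal{G}_p^{-1}\{F\}$ is the function $g$ with $\mathcal{G}_p\{g\}=F$, and $\mathcal{G}_p^{-1}\{F\}(x)$ is this function evaluated at $x$. The notation $\stackrel{d}{=}$ means equality in distribution. *)

theory Defs
  imports "HOL-Probability.Probability"
begin

definition gen_stieltjes :: "real \<Rightarrow> (real \<Rightarrow> real) \<Rightarrow> real \<Rightarrow> real" where
  "gen_stieltjes p g y = (LINT x:{0<..}|lborel. g x * (y + x) powr (- p))"

text \<open>g is (a version of) the inverse generalized Stieltjes transform of F: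
  the transform of g exists and equals F at (almost) every y > 0.\<close>
definition is_gen_stieltjes_inverse :: "real \<Rightarrow> (real \<Rightarrow> real) \<Rightarrow> (real \<Rightarrow> real) \<Rightarrow> bool" where
  "is_gen_stieltjes_inverse p F g \<longleftrightarrow>
     (AE y in lborel. y > 0 \<longrightarrow>
        set_integrable lborel {0<..} (\<lambda>x. g x * (y + x) powr (- p)) \<and>
        gen_stieltjes p g y = F y)"

end

theory Submission
  imports Defs
begin

text \<open>Put V = X/Y. Since Z has the law of X/(X+Y) = V/(1+V), the variable V has the law of
  the odds Z/(1-Z), whose density is fZ(v/(1+v))/(1+v)^2 on v > 0. By independence V also has
  the density v \<mapsto> \<integral> fX(x) fY(x/v) x/v^2 dx, so the two agree for almost every v > 0.
  At v = \<theta> s the factorisation of fY gives fY(x/v) = A(1/(\<theta> s)) B(x) s^p (s+x)^(-p), which turns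
  the second density into a multiple of the generalized Stieltjes transform of x B(x) fX(x) at s.\<close>

lemma set_nn_integral_lborel_eq_if_absolutely_integrable:
  fixes f :: "real \<Rightarrow> real"
  assumes [measurable]: "f \<in> borel_measurable borel" "A \<in> sets borel" and nonneg: "\<And>x. 0 \<le> f x"
  shows "(\<integral>\<^sup>+x\<in>A. ennreal (f x) \<partial>lborel) =
         (if f absolutely_integrable_on A then ennreal (integral A f) else \<infinity>)"
proof -
  have eq: "(\<integral>\<^sup>+x\<in>A. ennreal (f x) \<partial>lborel) = (\<integral>\<^sup>+x. ennreal (indicator A x * f x) \<partial>lborel)"
    by (intro nn_integral_cong) (simp add: indicator_def)
  show ?thesis
  proof (cases "f absolutely_integrable_on A")
    case True
    then have "integrable lborel (\<lambda>x. indicator A x * f x)"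
      by (simp add: set_integrable_def integrable_completion)
    then have "(\<integral>\<^sup>+x\<in>A. ennreal (f x) \<partial>lborel) = ennreal (set_lebesgue_integral lborel A f)"
      unfolding eq set_lebesgue_integral_def using nonneg by (simp add: nn_integral_eq_integral)
    also have "set_lebesgue_integral lborel A f = set_lebesgue_integral lebesgue A f"
      unfolding set_lebesgue_integral_def by (rule integral_completion[symmetric]) simp
    also have "\<dots> = integral A f"
      using True by (rule set_lebesgue_integral_eq_integral(2))
    finally show ?thesis
      using True by simp
  next
    case False
    then have "\<not> integrable lborel (\<lambda>x. indicator A x * f x)"
      by (auto simp: set_integrable_def dest: integrable_completion)
    then show ?thesis
      using False nonneg unfolding eq by (simp add: integrable_iff_bounded less_top[symmetric])
  qed
qed

lemma nn_integral_substitution_inj_on: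
  fixes f g g' :: "real \<Rightarrow> real"
  assumes [measurable]: "S \<in> sets borel" "g ` S \<in> sets borel"
    "f \<in> borel_measurable borel" "g \<in> borel_measurable borel" "g' \<in> borel_measurable borel"
    and nonneg: "\<And>x. 0 \<le> f x"
    and deriv: "\<And>x. x \<in> S \<Longrightarrow> (g has_field_derivative g' x) (at x within S)"
    and inj: "inj_on g S"
  shows "(\<integral>\<^sup>+y\<in>g ` S. ennreal (f y) \<partial>lborel) = (\<integral>\<^sup>+x\<in>S. ennreal (\<bar>g' x\<bar> * f (g x)) \<partial>lborel)"
proof -
  have S: "S \<in> sets lebesgue"
    by (simp add: sets_completionI_sets)
  show ?thesis
    using has_absolute_integral_change_of_variables_1'[OF S deriv inj, of f "integral (g ` S) f"]
      absolutely_integrable_change_of_variables_1'[OF S deriv inj, of f]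
    by (auto simp: set_nn_integral_lborel_eq_if_absolutely_integrable nonneg)
qed

lemma nn_integral_substitution_left_inverse:
  fixes f g g' h :: "real \<Rightarrow> real"
  assumes [measurable]: "S \<in> sets borel" "g ` S \<in> sets borel" "T \<in> sets borel"
      "f \<in> borel_measurable borel" "g \<in> borel_measurable borel" "g' \<in> borel_measurable borel"
      "h \<in> borel_measurable borel"
    and nonneg: "\<And>y. 0 \<le> f y"
    and deriv: "\<And>x. x \<in> S \<Longrightarrow> (g has_field_derivative g' x) (at x within S)"
    and left_inverse: "\<And>x. x \<in> S \<Longrightarrow> h (g x) = x"
  shows "(\<integral>\<^sup>+y\<in>g ` S. ennreal (f y) * indicator T (h y) \<partial>lborel) =
         (\<integral>\<^sup>+x\<in>S \<inter> T. ennreal (\<bar>g' x\<bar> * f (g x)) \<partial>lborel)"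
proof -
  have image: "g ` (S \<inter> T) = g ` S \<inter> h -` T"
    using left_inverse by force
  have [measurable]: "g ` (S \<inter> T) \<in> sets borel"
    unfolding image by measurable
  have "(\<integral>\<^sup>+y\<in>g ` S. ennreal (f y) * indicator T (h y) \<partial>lborel) =
        (\<integral>\<^sup>+y\<in>g ` (S \<inter> T). ennreal (f y) \<partial>lborel)"
    unfolding image by (intro nn_integral_cong) (simp split: split_indicator)
  also have "\<dots> = (\<integral>\<^sup>+x\<in>S \<inter> T. ennreal (\<bar>g' x\<bar> * f (g x)) \<partial>lborel)"
  proof (rule nn_integral_substitution_inj_on)
    show "inj_on g (S \<inter> T)"
      by (metis IntD1 inj_onI left_inverse)
  qed (use deriv nonneg in \<open>auto intro: has_field_derivative_subset\<close>)
  finally show ?thesis .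
qed

lemma nn_integral_reciprocal_substitution:
  fixes f :: "real \<Rightarrow> real" and c :: real
  assumes [measurable]: "f \<in> borel_measurable borel" "T \<in> sets borel"
    and nonneg: "\<And>y. 0 \<le> f y" and c: "c > 0"
  shows "(\<integral>\<^sup>+y\<in>{0<..}. ennreal (f y) * indicator T (c / y) \<partial>lborel) =
         (\<integral>\<^sup>+v\<in>{0<..} \<inter> T. ennreal (f (c / v) * (c / v\<^sup>2)) \<partial>lborel)"
proof -
  have "y \<in> (\<lambda>v. c / v) ` {0<..}" if "y > 0" for y
    using that c by (intro image_eqI[of y _ "c / y"]) auto
  then have image: "(\<lambda>v. c / v) ` {0<..} = {0<..}"
    using c by auto
  have "(\<integral>\<^sup>+y\<in>(\<lambda>v. c / v) ` {0<..}. ennreal (f y) * indicator T (c / y) \<partial>lborel) =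
        (\<integral>\<^sup>+v\<in>{0<..} \<inter> T. ennreal (\<bar>- c / v\<^sup>2\<bar> * f (c / v)) \<partial>lborel)"
    by (rule nn_integral_substitution_left_inverse[where h = "\<lambda>y. c / y"])
       (use c nonneg in \<open>auto simp: image power2_eq_square intro!: derivative_eq_intros\<close>)
  then show ?thesis
    using c by (simp add: image mult.commute)
qed

lemma nn_integral_quotient_substitution:
  fixes f g :: "real \<Rightarrow> real"
  assumes [measurable]: "f \<in> borel_measurable borel" "g \<in> borel_measurable borel" "T \<in> sets borel"
    and nonneg: "\<And>x. 0 \<le> f x" "\<And>y. 0 \<le> g y"
  shows "(\<integral>\<^sup>+x. \<integral>\<^sup>+y. ennreal (f x) * ennreal (g y) *
            (indicator {0<..} x * indicator {0<..} y * indicator T (x / y)) \<partial>lborel \<partial>lborel) =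
         (\<integral>\<^sup>+v\<in>T. (\<integral>\<^sup>+x\<in>{0<..}. ennreal (f x * g (x / v) * (x / v\<^sup>2)) \<partial>lborel) *
            indicator {0<..} v \<partial>lborel)"
proof -
  define F where "F x v = ennreal (f x * g (x / v) * (x / v\<^sup>2)) * indicator {0<..} x * indicator {0<..} v"
    for x v :: real
  have "(\<integral>\<^sup>+x. \<integral>\<^sup>+y. ennreal (f x) * ennreal (g y) *
            (indicator {0<..} x * indicator {0<..} y * indicator T (x / y)) \<partial>lborel \<partial>lborel) =
        (\<integral>\<^sup>+x. \<integral>\<^sup>+v. F x v * indicator T v \<partial>lborel \<partial>lborel)"
  proof (rule nn_integral_cong)
    fix x :: real
    show "(\<integral>\<^sup>+y. ennreal (f x) * ennreal (g y) *
             (indicator {0<..} x * indicator {0<..} y * indicator T (x / y)) \<partial>lborel) =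
          (\<integral>\<^sup>+v. F x v * indicator T v \<partial>lborel)"
    proof (cases "x > 0")
      case True
      have "(\<integral>\<^sup>+y. ennreal (f x) * ennreal (g y) *
               (indicator {0<..} x * indicator {0<..} y * indicator T (x / y)) \<partial>lborel) =
            ennreal (f x) * (\<integral>\<^sup>+y\<in>{0<..}. ennreal (g y) * indicator T (x / y) \<partial>lborel)"
        using True by (subst nn_integral_cmult[symmetric]) (auto intro!: nn_integral_cong simp: ac_simps)
      also have "\<dots> = ennreal (f x) * (\<integral>\<^sup>+v\<in>{0<..} \<inter> T. ennreal (g (x / v) * (x / v\<^sup>2)) \<partial>lborel)"
        using True nonneg by (simp add: nn_integral_reciprocal_substitution)
      also have "\<dots> = (\<integral>\<^sup>+v. F x v * indicator T v \<partial>lborel)"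
        using True nonneg
        by (subst nn_integral_cmult[symmetric])
           (auto intro!: nn_integral_cong simp: F_def ennreal_mult[symmetric] mult_ac split: split_indicator)
      finally show ?thesis .
    qed (simp add: F_def)
  qed
  also have "\<dots> = (\<integral>\<^sup>+v. \<integral>\<^sup>+x. F x v * indicator T v \<partial>lborel \<partial>lborel)"
    by (rule lborel_pair.Fubini') (simp add: F_def)
  also have "\<dots> = (\<integral>\<^sup>+v\<in>T. (\<integral>\<^sup>+x\<in>{0<..}. ennreal (f x * g (x / v) * (x / v\<^sup>2)) \<partial>lborel) *
                     indicator {0<..} v \<partial>lborel)"
    by (intro nn_integral_cong) (simp add: F_def split: split_indicator)
  finally show ?thesis .
qed

lemma (in prob_space) distributed_comp_left_inverse:
  fixes W :: "'a \<Rightarrow> real" and f g g' h :: "real \<Rightarrow> real"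
  assumes W: "distributed M lborel W (\<lambda>y. ennreal (f y))" and nonneg: "\<And>y. 0 \<le> f y"
    and [measurable]: "S \<in> sets borel" "g ` S \<in> sets borel"
      "g \<in> borel_measurable borel" "g' \<in> borel_measurable borel" "h \<in> borel_measurable borel"
    and deriv: "\<And>x. x \<in> S \<Longrightarrow> (g has_field_derivative g' x) (at x within S)"
    and left_inverse: "\<And>x. x \<in> S \<Longrightarrow> h (g x) = x"
    and range: "AE \<omega> in M. W \<omega> \<in> g ` S"
  shows "distributed M lborel (\<lambda>\<omega>. h (W \<omega>)) (\<lambda>x. ennreal (\<bar>g' x\<bar> * f (g x)) * indicator S x)"
proof -
  have [measurable]: "W \<in> borel_measurable M" "f \<in> borel_measurable borel"
    using W nonneg by (auto simp: distributed_def)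
  have "emeasure (distr M lborel (\<lambda>\<omega>. h (W \<omega>))) T =
        (\<integral>\<^sup>+x\<in>T. ennreal (\<bar>g' x\<bar> * f (g x)) * indicator S x \<partial>lborel)"
    if [measurable]: "T \<in> sets borel" for T
  proof -
    have "emeasure (distr M lborel (\<lambda>\<omega>. h (W \<omega>))) T = emeasure M ((\<lambda>\<omega>. h (W \<omega>)) -` T \<inter> space M)"
      by (simp add: emeasure_distr)
    also have "\<dots> = emeasure M (W -` (g ` S \<inter> h -` T) \<inter> space M)"
      by (rule emeasure_eq_AE) (use range in auto)
    also have "\<dots> = (\<integral>\<^sup>+y. ennreal (f y) * indicator (g ` S \<inter> h -` T) y \<partial>lborel)"
      by (rule distributed_emeasure[OF W]) measurable
    also have "\<dots> = (\<integral>\<^sup>+y\<in>g ` S. ennreal (f y) * indicator T (h y) \<partial>lborel)"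
      by (intro nn_integral_cong) (simp split: split_indicator)
    also have "\<dots> = (\<integral>\<^sup>+x\<in>S \<inter> T. ennreal (\<bar>g' x\<bar> * f (g x)) \<partial>lborel)"
      by (rule nn_integral_substitution_left_inverse) (use W deriv left_inverse nonneg in simp_all)
    also have "\<dots> = (\<integral>\<^sup>+x\<in>T. ennreal (\<bar>g' x\<bar> * f (g x)) * indicator S x \<partial>lborel)"
      by (intro nn_integral_cong) (simp add: indicator_def)
    finally show ?thesis .
  qed
  then show ?thesis
    unfolding distributed_def by (auto intro!: measure_eqI simp: emeasure_density)
qed

lemma (in prob_space) distributed_odds:
  fixes Z :: "'a \<Rightarrow> real" and fZ :: "real \<Rightarrow> real"
  assumes Z: "distributed M lborel Z (\<lambda>z. ennreal (fZ z))" and nonneg: "\<And>z. 0 \<le> fZ z"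
    and range: "AE \<omega> in M. Z \<omega> \<in> {0<..<1}"
  shows "distributed M lborel (\<lambda>\<omega>. Z \<omega> / (1 - Z \<omega>))
           (\<lambda>v. ennreal (fZ (v / (1 + v)) / (1 + v)\<^sup>2) * indicator {0<..} v)"
proof -
  have [measurable]: "fZ \<in> borel_measurable borel"
    using Z nonneg by (auto simp: distributed_def)
  have image: "(\<lambda>v. v / (1 + v)) ` {0<..} = {0<..<1::real}"
  proof (intro equalityI subsetI)
    fix z :: real assume "z \<in> (\<lambda>v. v / (1 + v)) ` {0<..}"
    then obtain v where "v > 0" "z = v / (1 + v)"
      by auto
    then show "z \<in> {0<..<1}"
      by (simp add: divide_less_eq_1 zero_less_divide_iff)
  next
    fix z :: real assume "z \<in> {0<..<1}"
    then show "z \<in> (\<lambda>v. v / (1 + v)) ` {0<..}"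
      by (intro image_eqI[of z _ "z / (1 - z)"]) (auto simp: field_simps)
  qed
  have "distributed M lborel (\<lambda>\<omega>. Z \<omega> / (1 - Z \<omega>))
          (\<lambda>v. ennreal (\<bar>1 / (1 + v)\<^sup>2\<bar> * fZ (v / (1 + v))) * indicator {0<..} v)"
  proof (rule distributed_comp_left_inverse[OF Z nonneg])
    show "((\<lambda>v. v / (1 + v)) has_field_derivative 1 / (1 + v)\<^sup>2) (at v within {0<..})"
      if "v \<in> {0<..}" for v :: real
      using that by (auto intro!: derivative_eq_intros simp: field_simps power2_eq_square)
    show "v / (1 + v) / (1 - v / (1 + v)) = v" if "v \<in> {0<..}" for v :: real
      using that by (simp add: field_simps)
  qed (use range in \<open>simp_all add: image\<close>)
  then show ?thesis
    by (rule distributed_cong_density[THEN iffD1, rotated 3]) (auto split: split_indicator)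
qed

lemma (in prob_space) distributed_divide_indep_pos:
  fixes X Y :: "'a \<Rightarrow> real" and fX fY :: "real \<Rightarrow> real"
  assumes X: "distributed M lborel X (\<lambda>x. ennreal (fX x))" and Y: "distributed M lborel Y (\<lambda>y. ennreal (fY y))"
    and nonneg: "\<And>x. 0 \<le> fX x" "\<And>y. 0 \<le> fY y"
    and indep: "indep_var borel X borel Y"
    and pos: "AE \<omega> in M. X \<omega> > 0" "AE \<omega> in M. Y \<omega> > 0"
  shows "distributed M lborel (\<lambda>\<omega>. X \<omega> / Y \<omega>)
           (\<lambda>v. (\<integral>\<^sup>+x\<in>{0<..}. ennreal (fX x * fY (x / v) * (x / v\<^sup>2)) \<partial>lborel) * indicator {0<..} v)"
proof -
  have [measurable]: "X \<in> borel_measurable M" "Y \<in> borel_measurable M"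
      "fX \<in> borel_measurable borel" "fY \<in> borel_measurable borel"
    using X Y nonneg by (auto simp: distributed_def)
  have "indep_var lborel X lborel Y"
    using indep unfolding indep_var_def indep_vars_def2 by (simp add: bool.case_eq_if)
  then have XY: "distributed M (lborel \<Otimes>\<^sub>M lborel) (\<lambda>\<omega>. (X \<omega>, Y \<omega>))
      (\<lambda>(x, y). ennreal (fX x) * ennreal (fY y))"
    by (intro distributed_joint_indep[OF sigma_finite_lborel sigma_finite_lborel X Y])
  have "emeasure (distr M lborel (\<lambda>\<omega>. X \<omega> / Y \<omega>)) T =
        (\<integral>\<^sup>+v\<in>T. (\<integral>\<^sup>+x\<in>{0<..}. ennreal (fX x * fY (x / v) * (x / v\<^sup>2)) \<partial>lborel) * indicator {0<..} v \<partial>lborel)"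
    if [measurable]: "T \<in> sets borel" for T
  proof -
    have "emeasure (distr M lborel (\<lambda>\<omega>. X \<omega> / Y \<omega>)) T =
          (\<integral>\<^sup>+v. indicator T v \<partial>distr M lborel (\<lambda>\<omega>. X \<omega> / Y \<omega>))"
      by (rule nn_integral_indicator[symmetric]) simp
    also have "\<dots> = (\<integral>\<^sup>+\<omega>. indicator T (X \<omega> / Y \<omega>) \<partial>M)"
      by (rule nn_integral_distr) simp_all
    also have "\<dots> = (\<integral>\<^sup>+\<omega>. indicator {0<..} (X \<omega>) * indicator {0<..} (Y \<omega>) * indicator T (X \<omega> / Y \<omega>) \<partial>M)"
      by (rule nn_integral_cong_AE) (use pos in auto)
    also have "\<dots> = (\<integral>\<^sup>+(x, y). ennreal (fX x) * ennreal (fY y) *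
                       (indicator {0<..} x * indicator {0<..} y * indicator T (x / y)) \<partial>(lborel \<Otimes>\<^sub>M lborel))"
      using distributed_nn_integral[OF XY,
          of "\<lambda>(x, y). indicator {0<..} x * indicator {0<..} y * indicator T (x / y)"]
      by (simp add: split_beta')
    also have "\<dots> = (\<integral>\<^sup>+x. \<integral>\<^sup>+y. ennreal (fX x) * ennreal (fY y) *
                       (indicator {0<..} x * indicator {0<..} y * indicator T (x / y)) \<partial>lborel \<partial>lborel)"
      by (subst lborel.nn_integral_fst[symmetric]) simp_all
    also have "\<dots> = (\<integral>\<^sup>+v\<in>T. (\<integral>\<^sup>+x\<in>{0<..}. ennreal (fX x * fY (x / v) * (x / v\<^sup>2)) \<partial>lborel) *
                       indicator {0<..} v \<partial>lborel)"
      by (rule nn_integral_quotient_substitution) (simp_all add: nonneg)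
    finally show ?thesis .
  qed
  then show ?thesis
    unfolding distributed_def by (auto intro!: measure_eqI simp: emeasure_density)
qed

lemma (in prob_space) distributed_divide_of_proportion:
  fixes X Y Z :: "'a \<Rightarrow> real" and fZ :: "real \<Rightarrow> real"
  assumes Z: "distributed M lborel Z (\<lambda>z. ennreal (fZ z))" and nonneg: "\<And>z. 0 \<le> fZ z"
    and [measurable]: "X \<in> borel_measurable M" "Y \<in> borel_measurable M"
    and pos: "AE \<omega> in M. X \<omega> > 0" "AE \<omega> in M. Y \<omega> > 0"
    and proportion: "distr M borel Z = distr M borel (\<lambda>\<omega>. X \<omega> / (X \<omega> + Y \<omega>))"
  shows "distributed M lborel (\<lambda>\<omega>. X \<omega> / Y \<omega>)
           (\<lambda>v. ennreal (fZ (v / (1 + v)) / (1 + v)\<^sup>2) * indicator {0<..} v)"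
proof -
  have [measurable]: "Z \<in> borel_measurable M"
    using Z by (simp add: distributed_def)
  have "AE z in distr M borel (\<lambda>\<omega>. X \<omega> / (X \<omega> + Y \<omega>)). z \<in> {0<..<1}"
    using pos by (subst AE_distr_iff) (auto simp: divide_less_eq_1)
  then have "AE z in distr M borel Z. z \<in> {0<..<1}"
    unfolding proportion .
  then have "AE \<omega> in M. Z \<omega> \<in> {0<..<1}"
    by (subst (asm) AE_distr_iff) simp_all
  then have odds: "distributed M lborel (\<lambda>\<omega>. Z \<omega> / (1 - Z \<omega>))
      (\<lambda>v. ennreal (fZ (v / (1 + v)) / (1 + v)\<^sup>2) * indicator {0<..} v)"
    using Z nonneg by (intro distributed_odds)
  have "distr M lborel (\<lambda>\<omega>. Z \<omega> / (1 - Z \<omega>)) = distr (distr M borel Z) lborel (\<lambda>z. z / (1 - z))"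
    by (simp add: distr_distr comp_def)
  also have "\<dots> = distr M lborel (\<lambda>\<omega>. X \<omega> / (X \<omega> + Y \<omega>) / (1 - X \<omega> / (X \<omega> + Y \<omega>)))"
    unfolding proportion by (simp add: distr_distr comp_def)
  also have "\<dots> = distr M lborel (\<lambda>\<omega>. X \<omega> / Y \<omega>)"
    by (rule distr_cong_AE) (use pos in \<open>auto simp: field_simps\<close>)
  finally show ?thesis
    using odds by (simp add: distributed_def)
qed

lemma (in prob_space) ratio_density_eq_odds_density:
  fixes X Y Z :: "'a \<Rightarrow> real" and fX fY fZ :: "real \<Rightarrow> real"
  assumes X: "distributed M lborel X (\<lambda>x. ennreal (fX x))" and Y: "distributed M lborel Y (\<lambda>y. ennreal (fY y))"
    and Z: "distributed M lborel Z (\<lambda>z. ennreal (fZ z))"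
    and nonneg: "\<And>x. 0 \<le> fX x" "\<And>y. 0 \<le> fY y" "\<And>z. 0 \<le> fZ z"
    and indep: "indep_var borel X borel Y"
    and pos: "AE \<omega> in M. X \<omega> > 0" "AE \<omega> in M. Y \<omega> > 0"
    and proportion: "distr M borel Z = distr M borel (\<lambda>\<omega>. X \<omega> / (X \<omega> + Y \<omega>))"
  shows "AE v in lborel. v > 0 \<longrightarrow>
           (\<integral>\<^sup>+x\<in>{0<..}. ennreal (fX x * fY (x / v) * (x / v\<^sup>2)) \<partial>lborel) =
           ennreal (fZ (v / (1 + v)) / (1 + v)\<^sup>2)"
proof -
  have [measurable]: "X \<in> borel_measurable M" "Y \<in> borel_measurable M"
    using X Y by (auto simp: distributed_def)
  have "distributed M lborel (\<lambda>\<omega>. X \<omega> / Y \<omega>)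
      (\<lambda>v. (\<integral>\<^sup>+x\<in>{0<..}. ennreal (fX x * fY (x / v) * (x / v\<^sup>2)) \<partial>lborel) * indicator {0<..} v)"
    by (rule distributed_divide_indep_pos[OF X Y nonneg(1,2) indep pos])
  moreover have "distributed M lborel (\<lambda>\<omega>. X \<omega> / Y \<omega>)
      (\<lambda>v. ennreal (fZ (v / (1 + v)) / (1 + v)\<^sup>2) * indicator {0<..} v)"
    by (rule distributed_divide_of_proportion[OF Z nonneg(3) _ _ pos proportion]) simp_all
  ultimately have "AE v in lborel.
      (\<integral>\<^sup>+x\<in>{0<..}. ennreal (fX x * fY (x / v) * (x / v\<^sup>2)) \<partial>lborel) * indicator {0<..} v =
      ennreal (fZ (v / (1 + v)) / (1 + v)\<^sup>2) * indicator {0<..} v"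
    by (rule distributed_unique)
  then show ?thesis
    by eventually_elim (auto simp: indicator_def)
qed

lemma one_plus_divide_powr_uminus:
  fixes s x p :: real
  assumes "s > 0" "x > 0"
  shows "(1 + x / s) powr (- p) = s powr p * (s + x) powr (- p)"
proof -
  have "1 + x / s = (s + x) / s"
    using assms by (simp add: field_simps)
  then show ?thesis
    using assms by (simp add: powr_divide powr_minus_divide)
qed

lemma gen_stieltjes_eq_of_ratio_density:
  fixes fX fY A B :: "real \<Rightarrow> real" and \<theta> p s r :: real
  assumes [measurable]: "fX \<in> borel_measurable borel" "fY \<in> borel_measurable borel"
    and nonneg: "\<And>x. 0 \<le> fX x" "\<And>y. 0 \<le> fY y" "0 \<le> r"
    and \<theta>: "\<theta> > 0" and s: "s > 0" and A: "A (1 / (\<theta> * s)) > 0"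
    and factor: "\<And>x t. x > 0 \<Longrightarrow> t > 0 \<Longrightarrow> fY (t * x) = A t * B x * (1 + \<theta> * (t * x)) powr (- p)"
    and ratio: "(\<integral>\<^sup>+x\<in>{0<..}. ennreal (fX x * fY (x / (\<theta> * s)) * (x / (\<theta> * s)\<^sup>2)) \<partial>lborel) = ennreal r"
  shows "set_integrable lborel {0<..} (\<lambda>x. x * B x * fX x * (s + x) powr (- p)) \<and>
         gen_stieltjes p (\<lambda>x. x * B x * fX x) s = r * (\<theta> * s)\<^sup>2 / (s powr p * A (1 / (\<theta> * s)))"
proof -
  define K where "K = A (1 / (\<theta> * s)) * s powr p / (\<theta> * s)\<^sup>2"
  have K: "K > 0"
    using A s \<theta> by (simp add: K_def)
  define k where "k x = indicator {0<..} x * (fX x * fY (x / (\<theta> * s)) * (x / (\<theta> * s)\<^sup>2)) / K" for x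
  have [measurable]: "k \<in> borel_measurable borel"
    unfolding k_def by measurable
  have k_nonneg: "0 \<le> k x" for x
    using K nonneg by (simp add: k_def indicator_def)
  have fY_scaled: "fY (x / (\<theta> * s)) = A (1 / (\<theta> * s)) * B x * (s powr p * (s + x) powr (- p))"
    if "x > 0" for x
    using factor[of x "1 / (\<theta> * s)"] that s \<theta> one_plus_divide_powr_uminus[of s x p] by simp
  have integrand: "indicator {0<..} x *\<^sub>R (x * B x * fX x * (s + x) powr (- p)) = k x" for x
    using K by (cases "x > 0") (auto simp: k_def K_def fY_scaled field_simps)
  have "(\<integral>\<^sup>+x. ennreal (k x) \<partial>lborel) = ennreal (r / K)"
  proof -
    have "(\<integral>\<^sup>+x. ennreal (k x) \<partial>lborel) =
          (\<integral>\<^sup>+x. ennreal (fX x * fY (x / (\<theta> * s)) * (x / (\<theta> * s)\<^sup>2)) * indicator {0<..} x *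
                 ennreal (1 / K) \<partial>lborel)"
      using K nonneg by (intro nn_integral_cong) (auto simp: k_def ennreal_mult[symmetric] indicator_def)
    also have "\<dots> = ennreal r * ennreal (1 / K)"
      by (subst nn_integral_multc, measurable) (simp only: ratio)
    also have "\<dots> = ennreal (r / K)"
      using K nonneg by (simp add: ennreal_mult[symmetric])
    finally show ?thesis .
  qed
  then have "has_bochner_integral lborel k (r / K)"
    using K nonneg k_nonneg by (intro has_bochner_integral_nn_integral) auto
  moreover have "r / K = r * (\<theta> * s)\<^sup>2 / (s powr p * A (1 / (\<theta> * s)))"
    by (simp add: K_def mult.commute)
  ultimately show ?thesis
    unfolding set_integrable_def gen_stieltjes_def set_lebesgue_integral_def integrand
    by (simp add: has_bochner_integral_iff)
qed

theorem theorem3: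
  fixes M :: "'a measure"
    and X Y Z :: "'a \<Rightarrow> real"
    and fX fY fZ :: "real \<Rightarrow> real"
    and A B C :: "real \<Rightarrow> real"
    and \<theta> p :: real
  assumes "prob_space M"
    and "AE \<omega> in M. X \<omega> > 0" and "AE \<omega> in M. Y \<omega> > 0" and "AE \<omega> in M. Z \<omega> > 0"
    and "\<And>x. fX x \<ge> 0" and "\<And>x. fY x \<ge> 0" and "\<And>x. fZ x \<ge> 0"
    and "distributed M lborel X (\<lambda>x. ennreal (fX x))"
    and "distributed M lborel Y (\<lambda>x. ennreal (fY x))"
    and "distributed M lborel Z (\<lambda>x. ennreal (fZ x))"
    and "prob_space.indep_var M borel X borel Y"
    and "distr M borel Z = distr M borel (\<lambda>\<omega>. X \<omega> / (X \<omega> + Y \<omega>))"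
    and "\<And>x. x > 0 \<Longrightarrow> A x > 0" and "\<And>x. x > 0 \<Longrightarrow> B x > 0" and "\<And>x. x > 0 \<Longrightarrow> C x > 0"
    and "\<theta> > 0" and "p > 0"
    and "\<And>x. x > 0 \<Longrightarrow> C x = (1 + \<theta> * x) powr (- p)"
    and "\<And>x s. x > 0 \<Longrightarrow> s > 0 \<Longrightarrow> fY (s * x) = A s * B x * C (s * x)"
  shows "is_gen_stieltjes_inverse p
           (\<lambda>s. 1 / (s powr p * A (1 / (\<theta> * s))) * (\<theta> * s / (1 + \<theta> * s))\<^sup>2
                 * fZ (\<theta> * s / (1 + \<theta> * s)))
           (\<lambda>x. x * B x * fX x)"
proof -
  interpret prob_space M by fact
  have [measurable]: "fX \<in> borel_measurable borel" "fY \<in> borel_measurable borel" "fZ \<in> borel_measurable borel"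
    using assms(5-10) by (auto simp: distributed_def)
  have identity: "AE v in lborel. v > 0 \<longrightarrow>
          (\<integral>\<^sup>+x\<in>{0<..}. ennreal (fX x * fY (x / v) * (x / v\<^sup>2)) \<partial>lborel) =
          ennreal (fZ (v / (1 + v)) / (1 + v)\<^sup>2)"
    by (rule ratio_density_eq_odds_density[OF assms(8-10,5-7,11,2,3,12)])
  have scaled: "AE s in lborel. \<theta> * s > 0 \<longrightarrow>
          (\<integral>\<^sup>+x\<in>{0<..}. ennreal (fX x * fY (x / (\<theta> * s)) * (x / (\<theta> * s)\<^sup>2)) \<partial>lborel) =
          ennreal (fZ (\<theta> * s / (1 + \<theta> * s)) / (1 + \<theta> * s)\<^sup>2)"
    using AE_borel_affine[of \<theta> _ 0, OF _ _ identity] assms(16) by simp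
  have factor: "fY (t * x) = A t * B x * (1 + \<theta> * (t * x)) powr (- p)" if "x > 0" "t > 0" for x t
    using that assms(18,19) by simp
  show ?thesis
    unfolding is_gen_stieltjes_inverse_def
    using scaled
  proof eventually_elim
    case (elim s)
    show ?case
    proof
      assume s: "s > 0"
      have "set_integrable lborel {0<..} (\<lambda>x. x * B x * fX x * (s + x) powr (- p)) \<and>
          gen_stieltjes p (\<lambda>x. x * B x * fX x) s =
          fZ (\<theta> * s / (1 + \<theta> * s)) / (1 + \<theta> * s)\<^sup>2 * (\<theta> * s)\<^sup>2 / (s powr p * A (1 / (\<theta> * s)))"
        using elim s assms(7,13,16)
        by (intro gen_stieltjes_eq_of_ratio_density[OF _ _ assms(5,6) _ assms(16) s _ factor]) simp_all
      then show "set_integrable lborel {0<..} (\<lambda>x. x * B x * fX x * (s + x) powr - p) \<and>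
          gen_stieltjes p (\<lambda>x. x * B x * fX x) s =
          1 / (s powr p * A (1 / (\<theta> * s))) * (\<theta> * s / (1 + \<theta> * s))\<^sup>2 * fZ (\<theta> * s / (1 + \<theta> * s))"
        by (simp add: power_divide mult_ac)
    qed
  qed
qed

end
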